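(* Let $X\sim P$ be a Borel probability measure on $\mathbb{R}^d$ and let $\alpha\in(0,\Pi(P))$ be such that $\mathrm{vol}_d(P_\alpha)>0$. Then: (i) for every non-singular $A\in\mathbb{R}^{d\times d}$, $b\in\mathbb{R}^d$ and $x\in\mathbb{R}^d$, $\mathrm{ID}_\alpha(Ax+b;P_{AX+b})=\mathrm{ID}_\alpha(x;P)$, where $P_{AX+b}$ is the law of $AX+b$; (ii) $P$ is halfspace symmetric about $x\in\mathbb{R}^d$ if and only if $\mathrm{ID}_\alpha(x;P)=(c,1)^\top$ for some $c\ge1/2$; (iii) if $x$ satisfies $\mathrm{HD}(x;P)=\Pi(P)$, then for every $u\in\mathbb{R}^d$ the first component of $\mathrm{ID}_\alpha(x+tu;P)$ is non-increasing and the second component is non-decreasing in $t\ge0$; (iv) for all $c_1,c_2\in\mathbb{R}$ the set $\{x\colon \mathrm{ID}^1_\alpha(x;P)\ge c_1,\ \mathrm{ID}^2_\alpha(x;P)\le c_2\}$ is convex, and it is compact whenever $c_1>0$; (v) $\mathrm{ID}^1_\alpha(\cdot;P)$ is upper semicontinuous, $\mathrm{ID}^2_\alpha(\cdot;P)$ is continuous on $\mathbb{R}^d$, and if $P$ has a density then $\mathrm{ID}_\alpha(\cdot;P)$ is continuous on $\mathbb{R}^d$; (vi) $\sup_{\|x\|\ge r}\mathrm{ID}^1_\alpha(x;P)\to0$ and $\inf_{\|x\|\ge r}\mathrm{ID}^2_\alpha(x;P)\to\infty$ as $r\to\infty$.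
   Context: For a Borel probability measure $P$ on $\mathbb{R}^d$ and $X\sim P$, the halfspace (Tukey) depth is $\mathrm{HD}(x;P)=\inf_{u\in\mathbb{R}^d}\Pr(u^\top X\le u^\top x)$; $\Pi(P)=\sup_{x}\mathrm{HD}(x;P)$; the central region is $P_\delta=\{x\colon\mathrm{HD}(x;P)\ge\delta\}$. For a convex body $K$, $\mathrm{Ill}(x;K)=\mathrm{vol}_d(\mathrm{conv}(K\cup\{x\}))$. The illumination depth is $\mathrm{ID}_\alpha(x;P)=(\mathrm{ID}^1_\alpha(x;P),\mathrm{ID}^2_\alpha(x;P))^\top=(\mathrm{HD}(x;P),\ \mathrm{Ill}(x;P_\alpha)/\mathrm{vol}_d(P_\alpha))^\top$. $P$ is halfspace symmetric about $x$ if every closed halfspace containing $x$ has $P$-probability at least $1/2$. *)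

theory Defs
  imports "HOL-Probability.Probability"
begin

definition HD :: "(real^'n) \<Rightarrow> (real^'n) measure \<Rightarrow> real" where
  "HD x P = (INF u. measure P {y. u \<bullet> y \<le> u \<bullet> x})"

definition maxdepth :: "(real^'n) measure \<Rightarrow> real" where
  "maxdepth P = (SUP x. HD x P)"

definition central_region :: "(real^'n) measure \<Rightarrow> real \<Rightarrow> (real^'n) set" where
  "central_region P \<delta> = {x. HD x P \<ge> \<delta>}"

definition Ill :: "(real^'n) \<Rightarrow> (real^'n) set \<Rightarrow> real" where
  "Ill x K = measure lborel (convex hull (K \<union> {x}))"

definition ID :: "real \<Rightarrow> (real^'n) \<Rightarrow> (real^'n) measure \<Rightarrow> real \<times> real" where
  "ID \<alpha> x P = (HD x P,
     Ill x (central_region P \<alpha>) / measure lborel (central_region P \<alpha>))"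

definition halfspace_symmetric :: "(real^'n) measure \<Rightarrow> (real^'n) \<Rightarrow> bool" where
  "halfspace_symmetric P x \<longleftrightarrow>
     (\<forall>u c. u \<noteq> 0 \<longrightarrow> u \<bullet> x \<le> c \<longrightarrow> measure P {y. u \<bullet> y \<le> c} \<ge> 1/2)"

definition upper_semicont :: "('a::topological_space \<Rightarrow> real) \<Rightarrow> bool" where
  "upper_semicont f \<longleftrightarrow> (\<forall>c. open {x. f x < c})"

end

theory Submission
  imports Defs
begin

text \<open>
  Halfspace depth is quasi-concave, upper semicontinuous and bounded by the mass outside a ball, so
  its upper level sets are convex and compact; a positive volume of \<open>P\<^sub>\<alpha>\<close> forces a ball inside it,
  hence \<open>\<alpha> \<le> 1/2\<close>.  The heart of the matter is that \<open>x \<mapsto> vol(conv(K \<union> {x}))\<close> is convex for a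
  convex body \<open>K\<close>: after a linear change of variables \<open>x\<close> moves along a coordinate axis, every
  line section of \<open>conv(K \<union> {x})\<close> parallel to that axis is an interval which is a convex combination
  of the corresponding sections for the endpoints, and integrating the section lengths (Fubini)
  gives convexity.  Convexity yields continuity of the second component and, together with a ball
  that \<open>conv(K \<union> {x})\<close> gains outside \<open>K\<close>, at least linear growth at infinity.  An invertible affine
  map transforms depths and central regions equivariantly and scales all volumes by one factor.
\<close>

section \<open>Volumes of linear and affine images\<close>

lemma measure_shear_cbox:
  fixes a b :: "real^'n"
  assumes "m \<noteq> n"
  shows "measure lebesgue ((\<lambda>x. \<chi> i. if i = m then x$m + x$n else x$i) ` cbox a b)
    = measure lebesgue (cbox a b)"
proof (cases "cbox a b = {}")
  case False
  let ?h = "\<lambda>x::real^'n. \<chi> i. if i = m then x$m + x$n else x$i"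
  \<comment> \<open>translate the box to meet the hypothesis \<open>0 \<le> a$n\<close> of \<open>measure_shear_interval\<close>\<close>
  define v :: "real^'n" where "v = (\<chi> i. if i = n then - a$n else 0)"
  have lin: "linear ?h"
    by (rule linearI) (auto simp: vec_eq_iff algebra_simps)
  have "cbox a b = (+) (- v) ` cbox (v + a) (v + b)"
    using cbox_translation[of "- v" "v + a" "v + b"] by simp
  moreover have "?h ` (+) (- v) ` X = (+) (- ?h v) ` ?h ` X" for X
    unfolding image_image by (simp add: linear_add[OF lin] linear_neg[OF lin])
  ultimately have "?h ` cbox a b = (+) (- ?h v) ` ?h ` cbox (v + a) (v + b)"
    by simp
  then have "measure lebesgue (?h ` cbox a b) = measure lebesgue ((+) (- ?h v) ` ?h ` cbox (v + a) (v + b))"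
    by (rule arg_cong)
  also have "\<dots> = measure lebesgue (?h ` cbox (v + a) (v + b))"
    by (rule measure_translation)
  also have "\<dots> = measure lebesgue (cbox (v + a) (v + b))"
    using assms False cbox_translation[of v a b] by (intro measure_shear_interval) (auto simp: v_def)
  also have "\<dots> = measure lebesgue (cbox a b)"
    by (metis cbox_translation measure_translation)
  finally show ?thesis .
qed simp

lemma measure_swap_cbox:
  fixes a b :: "real^'n"
  shows "measure lebesgue ((\<lambda>x. \<chi> i. x $ Transposition.transpose m n i) ` cbox a b)
    = measure lebesgue (cbox a b)"
proof (cases "cbox a b = {}")
  case False
  let ?h = "\<lambda>x::real^'n. \<chi> i. x $ Transposition.transpose m n i"
  have eq: "?h ` cbox a b = cbox (?h a) (?h b)"
    by (auto simp: image_iff lambda_swap_Galois mem_box_cart) (metis transpose_involutory)+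
  have "?h ` cbox a b \<noteq> {}"
    using False by blast
  then show ?thesis
    using prod.permute [OF permutes_swap_id, where S=UNIV and g="\<lambda>i. (b - a)$i", symmetric]
    by (simp add: eq content_cbox_cart False)
qed simp

text \<open>
  The library's \<open>measure_linear_image\<close> identifies the factor as \<open>\<bar>det (matrix f)\<bar>\<close> but requires a
  well-ordered index type; the existence of a common factor suffices here and holds for every finite
  index type.
\<close>

definition measure_scaling :: "(real^'n \<Rightarrow> real^'n) \<Rightarrow> bool" where
  "measure_scaling f \<longleftrightarrow> (\<exists>c\<ge>0. \<forall>S\<in>lmeasurable.
     f ` S \<in> lmeasurable \<and> measure lebesgue (f ` S) = c * measure lebesgue S)"

lemma measure_scaling_comp:
  fixes f g :: "real^'n \<Rightarrow> real^'n"
  assumes "measure_scaling f" "measure_scaling g"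
  shows "measure_scaling (f \<circ> g)"
proof -
  obtain c d where "c \<ge> 0" "d \<ge> 0"
    and f: "\<And>S. S \<in> lmeasurable \<Longrightarrow> f ` S \<in> lmeasurable \<and> measure lebesgue (f ` S) = c * measure lebesgue S"
    and g: "\<And>S. S \<in> lmeasurable \<Longrightarrow> g ` S \<in> lmeasurable \<and> measure lebesgue (g ` S) = d * measure lebesgue S"
    using assms unfolding measure_scaling_def by blast
  have "(f \<circ> g) ` S = f ` g ` S" for S
    by (simp add: image_comp)
  with f g \<open>c \<ge> 0\<close> \<open>d \<ge> 0\<close> show ?thesis
    unfolding measure_scaling_def by (intro exI[of _ "c * d"]) simp
qed

lemma measure_scaling_singular:
  fixes f :: "real^'n \<Rightarrow> real^'n"
  assumes "linear f" "\<not> inj f"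
  shows "measure_scaling f"
proof -
  have null: "f ` S \<in> null_sets lebesgue" for S
    using negligible_linear_singular_image assms negligible_iff_null_sets by blast
  then have "f ` S \<in> lmeasurable" "measure lebesgue (f ` S) = 0" for S
    by (simp_all add: fmeasurableI_null_sets measure_eq_0_null_sets)
  then show ?thesis
    unfolding measure_scaling_def by (intro exI[of _ 0]) simp
qed

lemma measure_scaling_stretch:
  fixes c :: "'n::finite \<Rightarrow> real"
  shows "measure_scaling (\<lambda>x::real^'n. \<chi> i. c i * x $ i)"
  unfolding measure_scaling_def
proof (intro exI[of _ "\<bar>prod c UNIV\<bar>"] conjI ballI)
  fix S :: "(real^'n) set"
  assume "S \<in> lmeasurable"
  then show "(\<lambda>x. \<chi> i. c i * x $ i) ` S \<in> lmeasurable"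
    "measure lebesgue ((\<lambda>x. \<chi> i. c i * x $ i) ` S) = \<bar>prod c UNIV\<bar> * measure lebesgue S"
    by (rule measurable_stretch, rule measure_stretch)
qed simp

lemma measure_scaling_if_preserves_cbox:
  fixes f :: "real^'n \<Rightarrow> real^'n"
  assumes "linear f" "\<And>a b. measure lebesgue (f ` cbox a b) = measure lebesgue (cbox a b)"
  shows "measure_scaling f"
  unfolding measure_scaling_def
proof (intro exI[of _ 1] conjI ballI)
  fix S :: "(real^'n) set"
  assume "S \<in> lmeasurable"
  from measure_linear_sufficient[OF assms(1) this, of 1] assms(2)
  show "f ` S \<in> lmeasurable" "measure lebesgue (f ` S) = 1 * measure lebesgue S"
    by simp_all
qed simp

lemma measure_scaling_linear:
  fixes f :: "real^'n \<Rightarrow> real^'n"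
  assumes "linear f"
  shows "measure_scaling f"
proof (rule induct_linear_elementary[OF assms])
  fix f g :: "real^'n \<Rightarrow> real^'n"
  assume "measure_scaling f" "measure_scaling g"
  then show "measure_scaling (f \<circ> g)"
    by (rule measure_scaling_comp)
next
  fix f :: "real^'n \<Rightarrow> real^'n" and i
  assume "linear f" "\<And>x. f x $ i = 0"
  then have "\<not> inj f"
    by (metis (full_types) linear_injective_imp_surjective one_neq_zero surjE vec_component)
  with \<open>linear f\<close> show "measure_scaling f"
    by (rule measure_scaling_singular)
next
  fix c :: "'n \<Rightarrow> real"
  show "measure_scaling (\<lambda>x. \<chi> i. c i * x $ i)"
    by (rule measure_scaling_stretch)
next
  fix m n :: 'n
  show "measure_scaling (\<lambda>x. \<chi> i. x $ Transposition.transpose m n i)"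
    by (intro measure_scaling_if_preserves_cbox linearI measure_swap_cbox) (simp_all add: vec_eq_iff)
next
  fix m n :: 'n
  assume "m \<noteq> n"
  then show "measure_scaling (\<lambda>x. \<chi> i. if i = m then x $ m + x $ n else x $ i)"
    by (intro measure_scaling_if_preserves_cbox linearI measure_shear_cbox) (auto simp: vec_eq_iff algebra_simps)
qed

lemma linear_image_measure_lborel_compact:
  fixes f :: "real^'n \<Rightarrow> real^'n"
  assumes "linear f"
  obtains c where "c \<ge> 0" "\<And>S. compact S \<Longrightarrow> measure lborel (f ` S) = c * measure lborel S"
proof -
  obtain c where "c \<ge> 0"
    and c: "\<And>S. S \<in> lmeasurable \<Longrightarrow> measure lebesgue (f ` S) = c * measure lebesgue S"
    using measure_scaling_linear[OF assms] unfolding measure_scaling_def by blast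
  show ?thesis
  proof (rule that[OF \<open>c \<ge> 0\<close>])
    fix S :: "(real^'n) set"
    assume S: "compact S"
    then have "compact (f ` S)"
      using assms by (intro compact_continuous_image linear_continuous_on linear_conv_bounded_linear[THEN iffD1])
    with S c[OF lmeasurable_compact[OF S]] show "measure lborel (f ` S) = c * measure lborel S"
      by (simp add: borel_compact)
  qed
qed

lemma invertible_affine_image_measure:
  fixes A :: "real^'n^'n" and b :: "real^'n"
  assumes "invertible A"
  obtains c where "c > 0" "\<And>S. compact S \<Longrightarrow> measure lborel ((\<lambda>y. A *v y + b) ` S) = c * measure lborel S"
proof -
  obtain A' where A': "A' ** A = mat 1"
    using assms unfolding invertible_def by blast
  obtain c where "c \<ge> 0" and c: "\<And>S. compact S \<Longrightarrow> measure lborel ((*v) A ` S) = c * measure lborel S"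
    using linear_image_measure_lborel_compact[OF matrix_vector_mul_linear] by metis
  obtain c' where c': "\<And>S. compact S \<Longrightarrow> measure lborel ((*v) A' ` S) = c' * measure lborel S"
    using linear_image_measure_lborel_compact[OF matrix_vector_mul_linear] by metis
  have compact_image: "compact ((*v) M ` S)" if "compact S" for S and M :: "real^'n^'n"
    using that by (intro compact_continuous_image linear_continuous_on linear_conv_bounded_linear[THEN iffD1]
        matrix_vector_mul_linear)
  have "(*v) A' ` (*v) A ` cball 0 1 = cball (0::real^'n) 1"
    by (simp add: image_comp o_def matrix_vector_mul_assoc A')
  then have "measure lborel (cball (0::real^'n) 1) = c' * (c * measure lborel (cball (0::real^'n) 1))"
    using c'[OF compact_image] c by (metis compact_cball)
  then have "c \<noteq> 0"
    using content_cball_pos[of 1 "0::real^'n"] by auto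
  have affine: "measure lborel ((\<lambda>y. A *v y + b) ` S) = c * measure lborel S" if "compact S" for S
  proof -
    have "(\<lambda>y. A *v y + b) ` S = (+) b ` (*v) A ` S"
      by (auto simp: image_image add.commute)
    moreover have "compact ((+) b ` (*v) A ` S)"
      using that by (intro compact_translation compact_image)
    ultimately have "measure lborel ((\<lambda>y. A *v y + b) ` S) = measure lebesgue ((+) b ` (*v) A ` S)"
      by (simp add: borel_compact)
    also have "\<dots> = measure lborel ((*v) A ` S)"
      using that compact_image by (simp add: measure_translation borel_compact)
    finally show ?thesis
      using c[OF that] by simp
  qed
  show ?thesis
    using \<open>c \<ge> 0\<close> \<open>c \<noteq> 0\<close> affine by (intro that[of c]) auto
qed

section \<open>Convexity of the illumination\<close>

lemma emeasure_lborel_sections: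
  fixes S :: "'a::euclidean_space set" and b :: 'a
  assumes b: "b \<in> Basis" and S: "S \<in> sets borel"
  shows "emeasure lborel S = (\<integral>\<^sup>+x. emeasure lborel {y. (\<Sum>c\<in>Basis-{b}. x c *\<^sub>R c) + y *\<^sub>R b \<in> S}
            \<partial>(Pi\<^sub>M (Basis-{b}) (\<lambda>_. lborel)))"
proof -
  interpret product_sigma_finite "\<lambda>_. lborel :: real measure" by standard
  let ?f = "\<lambda>f. \<Sum>b\<in>Basis. f b *\<^sub>R b :: 'a"
  let ?M = "Pi\<^sub>M Basis (\<lambda>_. lborel :: real measure)"
  let ?A = "?f -` S \<inter> space ?M"
  let ?line = "\<lambda>x y. (\<Sum>c\<in>Basis-{b}. x c *\<^sub>R c) + y *\<^sub>R b"
  have fm: "?f \<in> measurable ?M borel"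
    by measurable
  have line_eq: "?f (x(b := y)) = ?line x y" for x y
    using b by (simp add: sum.remove[of _ b] sum.cong[of "Basis - {b}" _ "\<lambda>c. (x(b := y)) c *\<^sub>R c"])
  have "emeasure lborel S = emeasure ?M ?A"
    using fm S by (subst lborel_eq) (rule emeasure_distr)
  also have "\<dots> = (\<integral>\<^sup>+x. indicator ?A x \<partial>?M)"
    using fm S by (subst nn_integral_indicator) (auto intro!: measurable_sets)
  also have "\<dots> = (\<integral>\<^sup>+x. (\<integral>\<^sup>+y. indicator ?A (x(b := y)) \<partial>lborel) \<partial>(Pi\<^sub>M (Basis-{b}) (\<lambda>_. lborel)))"
    using product_nn_integral_insert[of "Basis - {b}" b "indicator ?A"] fm S b
    by (auto simp: insert_absorb intro!: borel_measurable_indicator measurable_sets)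
  also have "\<dots> = (\<integral>\<^sup>+x. emeasure lborel {y. ?line x y \<in> S} \<partial>(Pi\<^sub>M (Basis-{b}) (\<lambda>_. lborel)))"
  proof (intro nn_integral_cong)
    fix x assume x: "x \<in> space (Pi\<^sub>M (Basis-{b}) (\<lambda>_. lborel :: real measure))"
    then have "x(b := y) \<in> space ?M" for y
      using b by (auto simp: space_PiM PiE_def extensional_def)
    then have "indicator ?A (x(b := y)) = (indicator {y. ?line x y \<in> S} y :: ennreal)" for y
      by (auto simp del: fun_upd_apply simp: line_eq split: split_indicator)
    moreover have "{y. ?line x y \<in> S} \<in> sets lborel"
      using S by measurable
    ultimately show "(\<integral>\<^sup>+y. indicator ?A (x(b := y)) \<partial>lborel) = emeasure lborel {y. ?line x y \<in> S}"
      by simp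
  qed
  finally show ?thesis .
qed

lemma borel_measurable_emeasure_sections:
  fixes S :: "'a::euclidean_space set" and b :: 'a
  assumes S: "S \<in> sets borel"
  shows "(\<lambda>x. emeasure lborel {y. (\<Sum>c\<in>Basis-{b}. x c *\<^sub>R c) + y *\<^sub>R b \<in> S})
     \<in> borel_measurable (Pi\<^sub>M (Basis-{b}) (\<lambda>_. lborel))"
proof -
  let ?N = "Pi\<^sub>M (Basis-{b}) (\<lambda>_. lborel :: real measure)"
  let ?F = "\<lambda>(x, y). (\<Sum>c\<in>Basis-{b}. x c *\<^sub>R c) + y *\<^sub>R b"
  have "?F \<in> borel_measurable (?N \<Otimes>\<^sub>M lborel)"
    by measurable
  then have "?F -` S \<inter> space (?N \<Otimes>\<^sub>M lborel) \<in> sets (?N \<Otimes>\<^sub>M lborel)"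
    using S by (rule measurable_sets)
  from lborel.measurable_emeasure_Pair[OF this] show ?thesis
    by (rule measurable_cong[THEN iffD1, rotated]) (simp add: space_pair_measure vimage_def)
qed

lemma emeasure_lborel_convex_combination_le:
  fixes A B C :: "real set"
  assumes A: "compact A" "convex A" and B: "compact B" "convex B" and w: "0 \<le> w" "w \<le> 1"
    and C: "\<And>y. y \<in> C \<Longrightarrow> \<exists>y1\<in>A. \<exists>y2\<in>B. y = (1 - w) * y1 + w * y2"
  shows "emeasure lborel C \<le> ennreal (1 - w) * emeasure lborel A + ennreal w * emeasure lborel B"
proof (cases "A = {} \<or> B = {}")
  case True
  then have "C = {}"
    using C by blast
  then show ?thesis
    by simp
next
  case False
  obtain a1 c1 a2 c2 where AB: "A = {a1..c1}" "B = {a2..c2}"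
    using A B connected_compact_interval_1 convex_connected by metis
  with False have le: "a1 \<le> c1" "a2 \<le> c2"
    by auto
  have ord: "(1 - w) * a1 + w * a2 \<le> (1 - w) * c1 + w * c2"
    using le w by (intro add_mono mult_left_mono) auto
  have "C \<subseteq> {(1 - w) * a1 + w * a2 .. (1 - w) * c1 + w * c2}"
  proof
    fix y assume "y \<in> C"
    then obtain y1 y2 where "y1 \<in> {a1..c1}" "y2 \<in> {a2..c2}" "y = (1 - w) * y1 + w * y2"
      using C AB by blast
    with w show "y \<in> {(1 - w) * a1 + w * a2 .. (1 - w) * c1 + w * c2}"
      by (auto intro!: add_mono mult_left_mono)
  qed
  then have "emeasure lborel C \<le> emeasure lborel {(1 - w) * a1 + w * a2 .. (1 - w) * c1 + w * c2}"
    by (intro emeasure_mono) auto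
  also have "\<dots> = ennreal ((1 - w) * (c1 - a1) + w * (c2 - a2))"
    using ord by (subst emeasure_lborel_Icc) (simp_all add: algebra_simps)
  also have "\<dots> = ennreal (1 - w) * emeasure lborel A + ennreal w * emeasure lborel B"
    using le w AB by (simp add: ennreal_mult ennreal_plus[symmetric])
  finally show ?thesis .
qed

text \<open>
  Moving the apex of \<open>conv(K \<union> {p + z b})\<close> along \<open>b\<close> moves each point of the hull along \<open>b\<close>, in
  proportion to the weight \<open>1 - u\<close> of the apex in that point.
\<close>

lemma convex_hull_insert_shift_apex:
  fixes K :: "'a::real_vector set"
  assumes "convex K" "K \<noteq> {}" "q \<in> convex hull (insert (p + z *\<^sub>R b) K)"
  obtains u where "\<And>s. q + ((1 - u) * (s - z)) *\<^sub>R b \<in> convex hull (insert (p + s *\<^sub>R b) K)"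
proof -
  have hull: "convex hull (insert a K) = {(1 - u) *\<^sub>R a + u *\<^sub>R k |k u. 0 \<le> u \<and> u \<le> 1 \<and> k \<in> K}" for a
    using assms(1,2) by (simp add: convex_hull_insert_alt convex_hull_eq[THEN iffD2])
  obtain k u where "0 \<le> u" "u \<le> 1" "k \<in> K" and q: "q = (1 - u) *\<^sub>R (p + z *\<^sub>R b) + u *\<^sub>R k"
    using assms(3) unfolding hull by blast
  moreover have "q + ((1 - u) * (s - z)) *\<^sub>R b = (1 - u) *\<^sub>R (p + s *\<^sub>R b) + u *\<^sub>R k" for s
    unfolding q by (simp add: algebra_simps)
  ultimately show ?thesis
    using that unfolding hull by blast
qed

lemma compact_convex_line_section:
  fixes L :: "'a::real_normed_vector set"
  assumes "compact L" "convex L" "b \<noteq> 0"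
  shows "compact {y. h + y *\<^sub>R b \<in> L}" "convex {y. h + y *\<^sub>R b \<in> L}"
proof -
  let ?L = "(\<lambda>q. q - h) ` L"
  have eq: "{y. h + y *\<^sub>R b \<in> L} = (\<lambda>y. y *\<^sub>R b) -` ?L"
    by (force simp: image_iff)
  have L: "compact ?L" "convex ?L"
    using assms by (simp_all add: compact_translation_subtract convex_translation_subtract)
  then obtain B where B: "\<And>q. q \<in> ?L \<Longrightarrow> norm q \<le> B"
    using compact_imp_bounded bounded_iff by metis
  have "norm y \<le> B / norm b" if "y \<in> (\<lambda>y. y *\<^sub>R b) -` ?L" for y
    using B[of "y *\<^sub>R b"] that assms(3) by (simp add: field_simps)
  then have "bounded ((\<lambda>y. y *\<^sub>R b) -` ?L)"
    unfolding bounded_iff by blast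
  moreover have "closed ((\<lambda>y. y *\<^sub>R b) -` ?L)"
    using L by (intro continuous_closed_vimage compact_imp_closed continuous_intros)
  ultimately show "compact {y. h + y *\<^sub>R b \<in> L}"
    unfolding eq by (simp add: compact_eq_bounded_closed)
  show "convex {y. h + y *\<^sub>R b \<in> L}"
    unfolding eq using L by (intro convex_linear_vimage linear_scaleR_left)
qed

lemma emeasure_line_section_convex_hull_insert:
  fixes K :: "'a::euclidean_space set" and h p b :: 'a
  assumes K: "compact K" "convex K" "K \<noteq> {}" and b: "b \<noteq> 0" and w: "0 \<le> w" "w \<le> 1"
  defines "F \<equiv> \<lambda>s. {y. h + y *\<^sub>R b \<in> convex hull (insert (p + s *\<^sub>R b) K)}"
  shows "emeasure lborel (F ((1 - w) * s1 + w * s2))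
    \<le> ennreal (1 - w) * emeasure lborel (F s1) + ennreal w * emeasure lborel (F s2)"
proof -
  have sections: "compact (F s)" "convex (F s)" for s
    unfolding F_def using K b by (simp_all add: compact_convex_line_section compact_convex_hull)
  show ?thesis
  proof (rule emeasure_lborel_convex_combination_le[OF sections sections w])
    let ?z = "(1 - w) * s1 + w * s2"
    fix y assume "y \<in> F ?z"
    then obtain u where u: "\<And>s. h + y *\<^sub>R b + ((1 - u) * (s - ?z)) *\<^sub>R b \<in> convex hull (insert (p + s *\<^sub>R b) K)"
      using convex_hull_insert_shift_apex[OF K(2,3)] unfolding F_def by blast
    have "y + (1 - u) * (s - ?z) \<in> F s" for s
      using u[of s] by (simp add: F_def algebra_simps)
    moreover have "y = (1 - w) * (y + (1 - u) * (s1 - ?z)) + w * (y + (1 - u) * (s2 - ?z))"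
      by (simp add: algebra_simps)
    ultimately show "\<exists>y1\<in>F s1. \<exists>y2\<in>F s2. y = (1 - w) * y1 + w * y2"
      by blast
  qed
qed

lemma measure_convex_hull_insert_convex_along_basis:
  fixes K :: "'a::euclidean_space set"
  assumes K: "compact K" "convex K" and b: "b \<in> Basis" and w: "0 \<le> w" "w \<le> 1"
  shows "measure lborel (convex hull (insert (p + ((1 - w) * s1 + w * s2) *\<^sub>R b) K))
     \<le> (1 - w) * measure lborel (convex hull (insert (p + s1 *\<^sub>R b) K))
       + w * measure lborel (convex hull (insert (p + s2 *\<^sub>R b) K))"
proof (cases "K = {}")
  case False
  let ?L = "\<lambda>s. convex hull (insert (p + s *\<^sub>R b) K)"
  let ?N = "Pi\<^sub>M (Basis - {b}) (\<lambda>_. lborel :: real measure)"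
  let ?F = "\<lambda>s x. emeasure lborel {y. (\<Sum>c\<in>Basis-{b}. x c *\<^sub>R c) + y *\<^sub>R b \<in> ?L s}"
  have L: "compact (?L s)" for s
    using K(1) by (intro compact_convex_hull) auto
  then have L_borel: "?L s \<in> sets borel" for s
    by (simp add: borel_compact)
  have L_finite: "emeasure lborel (?L s) = ennreal (measure lborel (?L s))" for s
    using fmeasurable_compact[OF L] by (rule emeasure_eq_measure2)
  have F_measurable: "?F s \<in> borel_measurable ?N" for s
    by (rule borel_measurable_emeasure_sections[OF L_borel])
  have "ennreal (measure lborel (?L ((1 - w) * s1 + w * s2))) = (\<integral>\<^sup>+x. ?F ((1 - w) * s1 + w * s2) x \<partial>?N)"
    unfolding L_finite[symmetric] by (rule emeasure_lborel_sections[OF b L_borel])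
  also have "\<dots> \<le> (\<integral>\<^sup>+x. ennreal (1 - w) * ?F s1 x + ennreal w * ?F s2 x \<partial>?N)"
    using K False b w by (intro nn_integral_mono emeasure_line_section_convex_hull_insert) auto
  also have "\<dots> = ennreal (1 - w) * (\<integral>\<^sup>+x. ?F s1 x \<partial>?N) + ennreal w * (\<integral>\<^sup>+x. ?F s2 x \<partial>?N)"
    using F_measurable by (simp add: nn_integral_add nn_integral_cmult)
  also have "\<dots> = ennreal ((1 - w) * measure lborel (?L s1) + w * measure lborel (?L s2))"
    using w by (simp add: emeasure_lborel_sections[OF b L_borel, symmetric] L_finite ennreal_mult ennreal_plus)
  finally show ?thesis
    using w by (subst (asm) ennreal_le_iff) auto
qed simp

lemma linear_map_basis_to_direction:
  fixes d :: "'a::euclidean_space"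
  assumes "d \<noteq> 0"
  obtains b :: 'a and T T' :: "'a \<Rightarrow> 'a" where "b \<in> Basis" "linear T" "linear T'" "T b = d" "\<And>q. T (T' q) = q"
proof -
  obtain b :: 'a where b: "b \<in> Basis" "d \<bullet> b \<noteq> 0"
    using assms euclidean_all_zero_iff by blast
  define T where "T q = q + (q \<bullet> b) *\<^sub>R (d - b)" for q
  define T' where "T' q = q - ((q \<bullet> b) / (d \<bullet> b)) *\<^sub>R (d - b)" for q
  have "T' q \<bullet> b = q \<bullet> b - ((q \<bullet> b) / (d \<bullet> b)) * (d \<bullet> b - b \<bullet> b)" for q
    by (simp add: T'_def inner_diff_left)
  also have "\<dots> q = (q \<bullet> b) / (d \<bullet> b)" for q
    using b by (simp add: field_simps)
  finally have "T' q \<bullet> b = (q \<bullet> b) / (d \<bullet> b)" for q .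
  then have "T (T' q) = q" for q
    by (simp add: T_def T'_def)
  moreover have "linear T"
    unfolding T_def by (rule linearI) (auto simp: inner_add_left algebra_simps)
  moreover have "linear T'"
    unfolding T'_def by (rule linearI) (auto simp: inner_add_left algebra_simps add_divide_distrib)
  moreover have "T b = d"
    using b by (simp add: T_def)
  ultimately show ?thesis
    using that[OF b(1)] by blast
qed

lemma measure_convex_hull_insert_convex_along_line:
  fixes K :: "(real^'n) set"
  assumes K: "compact K" "convex K" and w: "0 \<le> w" "w \<le> 1"
  shows "measure lborel (convex hull (insert (x + ((1 - w) * s1 + w * s2) *\<^sub>R d) K))
     \<le> (1 - w) * measure lborel (convex hull (insert (x + s1 *\<^sub>R d) K))
       + w * measure lborel (convex hull (insert (x + s2 *\<^sub>R d) K))"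
proof (cases "d = 0")
  case False
  obtain b :: "real^'n" and T T' where b: "b \<in> Basis" and T: "linear T" "linear T'" "T b = d" "\<And>q. T (T' q) = q"
    using linear_map_basis_to_direction[OF False] by metis
  obtain c where "c \<ge> 0" and c: "\<And>S. compact S \<Longrightarrow> measure lborel (T ` S) = c * measure lborel S"
    using linear_image_measure_lborel_compact[OF T(1)] by blast
  define K' where "K' = T' ` K"
  have K': "compact K'" "convex K'"
    unfolding K'_def using K T(2)
    by (auto intro: convex_linear_image compact_continuous_image linear_continuous_on
        linear_conv_bounded_linear[THEN iffD1])
  have "T ` K' = K"
    unfolding K'_def image_comp by (simp add: T(4) comp_def)
  moreover have "T (T' x + s *\<^sub>R b) = x + s *\<^sub>R d" for s
    using T by (simp add: linear_add linear_scale)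
  ultimately have "convex hull (insert (x + s *\<^sub>R d) K) = T ` (convex hull (insert (T' x + s *\<^sub>R b) K'))" for s
    by (simp add: convex_hull_linear_image[OF T(1)])
  then have G: "measure lborel (convex hull (insert (x + s *\<^sub>R d) K))
      = c * measure lborel (convex hull (insert (T' x + s *\<^sub>R b) K'))" for s
    using K'(1) by (simp add: c compact_convex_hull)
  from measure_convex_hull_insert_convex_along_basis[OF K' b w, of "T' x" s1 s2] \<open>c \<ge> 0\<close>
  show ?thesis
    unfolding G by (auto simp: algebra_simps dest: mult_left_mono[of _ _ c])
qed (simp add: algebra_simps)

lemma convex_on_measure_convex_hull_insert:
  fixes K :: "(real^'n) set"
  assumes "compact K" "convex K"
  shows "convex_on UNIV (\<lambda>x. measure lborel (convex hull (insert x K)))"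
proof (rule convex_onI)
  fix t :: real and x y :: "real^'n"
  assume "0 < t" "t < 1"
  moreover have "x + ((1 - t) * 0 + t * 1) *\<^sub>R (y - x) = (1 - t) *\<^sub>R x + t *\<^sub>R y"
    by (simp add: algebra_simps)
  ultimately show "measure lborel (convex hull (insert ((1 - t) *\<^sub>R x + t *\<^sub>R y) K))
    \<le> (1 - t) * measure lborel (convex hull (insert x K)) + t * measure lborel (convex hull (insert y K))"
    using measure_convex_hull_insert_convex_along_line[OF assms, of t x 0 1 "y - x"] by simp
qed simp

lemma Ill_eq_convex_hull_insert: "Ill x K = measure lborel (convex hull (insert x K))"
  by (simp add: Ill_def)

lemma Ill_of_mem: "convex K \<Longrightarrow> x \<in> K \<Longrightarrow> Ill x K = measure lborel K"
  by (simp add: Ill_def insert_absorb convex_hull_eq[THEN iffD2])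

lemma Ill_mono:
  fixes K :: "(real^'n) set"
  assumes "compact K" "x \<in> convex hull (insert y K)"
  shows "Ill x K \<le> Ill y K"
proof -
  have "convex hull (insert x K) \<subseteq> convex hull (insert y K)"
    using assms(2) by (intro hull_minimal) (auto intro: hull_inc)
  then show ?thesis
    unfolding Ill_def using assms(1)
    by (intro measure_mono_fmeasurable) (auto intro!: fmeasurable_compact compact_convex_hull borel_compact)
qed

lemma convex_on_Ill:
  fixes K :: "(real^'n) set"
  shows "compact K \<Longrightarrow> convex K \<Longrightarrow> convex_on UNIV (\<lambda>x. Ill x K)"
  unfolding Ill_def by (simp add: convex_on_measure_convex_hull_insert)

lemma continuous_on_Ill:
  fixes K :: "(real^'n) set"
  shows "compact K \<Longrightarrow> convex K \<Longrightarrow> continuous_on UNIV (\<lambda>x. Ill x K)"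
  by (intro convex_on_continuous open_UNIV convex_on_Ill)

lemma convex_on_ge_linear_growth:
  fixes f :: "'a::real_normed_vector \<Rightarrow> real"
  assumes f: "convex_on UNIV f" and r: "0 < r" "r \<le> dist c x"
    and sphere: "\<And>y. dist c y = r \<Longrightarrow> f c + m \<le> f y"
  shows "f c + m * dist c x / r \<le> f x"
proof -
  define t where "t = r / dist c x"
  have "0 < dist c x"
    using r by linarith
  then have t: "0 < t" "t \<le> 1"
    using r by (simp_all add: t_def field_simps)
  have "c - ((1 - t) *\<^sub>R c + t *\<^sub>R x) = t *\<^sub>R (c - x)"
    by (simp add: algebra_simps)
  then have "dist c ((1 - t) *\<^sub>R c + t *\<^sub>R x) = t * dist c x"
    using t by (simp add: dist_norm)
  also have "\<dots> = r"
    using \<open>0 < dist c x\<close> by (simp add: t_def)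
  finally have "dist c ((1 - t) *\<^sub>R c + t *\<^sub>R x) = r" .
  then have "f c + m \<le> f ((1 - t) *\<^sub>R c + t *\<^sub>R x)"
    by (rule sphere)
  also have "\<dots> \<le> (1 - t) * f c + t * f x"
    using t by (intro convex_onD[OF f]) auto
  finally have "m / t \<le> f x - f c"
    using t by (simp add: field_simps)
  then show ?thesis
    using r by (simp add: t_def field_simps)
qed

lemma cball_midpoint_subset_convex_hull_insert:
  fixes K :: "'a::real_normed_vector set"
  assumes "cball c \<rho> \<subseteq> K"
  shows "cball ((1/2) *\<^sub>R x + (1/2) *\<^sub>R c) (\<rho> / 2) \<subseteq> convex hull (insert x K)"
proof
  fix z assume z: "z \<in> cball ((1/2) *\<^sub>R x + (1/2) *\<^sub>R c) (\<rho> / 2)"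
  define k where "k = 2 *\<^sub>R z - x"
  have "c - k = 2 *\<^sub>R ((1/2) *\<^sub>R x + (1/2) *\<^sub>R c - z)"
    by (simp add: k_def algebra_simps)
  then have "dist c k \<le> \<rho>"
    using z by (simp add: dist_norm)
  then have "(1/2) *\<^sub>R x + (1/2) *\<^sub>R k \<in> convex hull (insert x K)"
    using assms by (intro convexD[OF convex_convex_hull] hull_inc) auto
  moreover have "(1/2) *\<^sub>R x + (1/2) *\<^sub>R k = z"
    by (simp add: k_def algebra_simps)
  ultimately show "z \<in> convex hull (insert x K)"
    by simp
qed

lemma Ill_ge_measure_add_ball:
  fixes K :: "(real^'n) set"
  assumes K: "compact K" and ball: "cball c \<rho> \<subseteq> K" "0 < \<rho>" and bounded: "K \<subseteq> cball c R"
    and x: "dist c x = 4 * R"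
  shows "measure lborel K + measure lborel (cball c (\<rho> / 2)) \<le> Ill x K"
proof -
  let ?B = "cball ((1/2) *\<^sub>R x + (1/2) *\<^sub>R c) (\<rho> / 2)"
  obtain y where y: "dist c y = \<rho>"
    using vector_choose_dist[of \<rho> c] ball(2) by auto
  then have "y \<in> cball c \<rho>"
    by simp
  then have "y \<in> cball c R"
    using ball(1) bounded by blast
  with y have "\<rho> \<le> R"
    by simp
  have "c - ((1/2) *\<^sub>R x + (1/2) *\<^sub>R c) = (1/2) *\<^sub>R (c - x)"
    by (simp add: vec_eq_iff algebra_simps)
  then have "dist c ((1/2) *\<^sub>R x + (1/2) *\<^sub>R c) = 2 * R"
    using x by (simp add: dist_norm)
  then have "R < dist c z" if "z \<in> ?B" for z
    using that dist_triangle[of c "(1/2) *\<^sub>R x + (1/2) *\<^sub>R c" z] \<open>\<rho> \<le> R\<close> ball(2)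
    by (simp add: dist_commute)
  then have "?B \<inter> K = {}"
    using bounded by fastforce
  then have "measure lborel K + measure lborel ?B = measure lborel (K \<union> ?B)"
    using K by (simp add: measure_Un3 fmeasurable_compact Int_commute)
  also have "\<dots> \<le> Ill x K"
    unfolding Ill_eq_convex_hull_insert using K cball_midpoint_subset_convex_hull_insert[OF ball(1)]
    by (intro measure_mono_fmeasurable fmeasurable_compact compact_convex_hull)
      (auto intro: hull_inc borel_compact)
  finally show ?thesis
    using ball(2) by (simp add: content_cball)
qed

lemma convex_on_sublevel_set:
  fixes f :: "'a::real_vector \<Rightarrow> real"
  assumes "convex_on UNIV f"
  shows "convex {x. f x \<le> c}"
  unfolding convex_alt
proof (intro ballI allI impI)
  fix x y and u :: real
  assume "x \<in> {x. f x \<le> c}" "y \<in> {x. f x \<le> c}" "0 \<le> u \<and> u \<le> 1"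
  then have "f ((1 - u) *\<^sub>R x + u *\<^sub>R y) \<le> (1 - u) * f x + u * f y"
    "(1 - u) * f x + u * f y \<le> (1 - u) * c + u * c"
    by (auto intro!: convex_onD[OF assms] add_mono mult_left_mono)
  then show "(1 - u) *\<^sub>R x + u *\<^sub>R y \<in> {x. f x \<le> c}"
    by (simp add: algebra_simps)
qed

lemma norm_ge_nonempty: "{x::'a::{real_normed_vector, perfect_space}. r \<le> norm x} \<noteq> {}"
proof -
  obtain x :: 'a where "norm x = \<bar>r\<bar>"
    using vector_choose_size[of "\<bar>r\<bar>"] by auto
  then show ?thesis
    by (auto intro!: exI[of _ x])
qed

lemma filterlim_INF_norm_ge_at_top:
  fixes g :: "'a::{real_normed_vector, perfect_space} \<Rightarrow> real"
  assumes "b > 0" and growth: "\<And>x. R \<le> dist c x \<Longrightarrow> a + b * dist c x \<le> g x"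
  shows "filterlim (\<lambda>r. INF x\<in>{x. r \<le> norm x}. g x) at_top at_top"
  unfolding filterlim_at_top eventually_at_top_linorder
proof
  fix Z :: real
  show "\<exists>r0. \<forall>r\<ge>r0. Z \<le> (INF x\<in>{x. r \<le> norm x}. g x)"
  proof (intro exI[of _ "norm c + \<bar>R\<bar> + \<bar>Z - a\<bar> / b"] allI impI cINF_greatest[OF norm_ge_nonempty])
    fix r :: real and x :: 'a
    assume "norm c + \<bar>R\<bar> + \<bar>Z - a\<bar> / b \<le> r" "x \<in> {x. r \<le> norm x}"
    then have dist: "\<bar>R\<bar> + \<bar>Z - a\<bar> / b \<le> dist c x"
      using norm_triangle_ineq2[of x c] by (simp add: dist_norm norm_minus_commute)
    then have "\<bar>Z - a\<bar> / b \<le> dist c x"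
      by linarith
    then have "Z \<le> a + b * dist c x"
      using \<open>b > 0\<close> by (simp add: field_simps)
    moreover have "0 \<le> \<bar>Z - a\<bar> / b"
      using \<open>b > 0\<close> by simp
    then have "R \<le> dist c x"
      using dist abs_ge_self[of R] by linarith
    ultimately show "Z \<le> g x"
      using growth order_trans by blast
  qed
qed

section \<open>Halfspace depth\<close>

locale euclidean_distribution = prob_space P for P :: "(real^'n) measure" +
  assumes sets_P: "sets P = sets borel"
begin

lemma space_P [simp]: "space P = UNIV"
  using sets_eq_imp_space_eq[OF sets_P] by simp

lemma closed_sets_P [intro]: "closed S \<Longrightarrow> S \<in> sets P"
  using sets_P borel_closed by auto

lemma halfspace_sets_P [simp]: "{y. u \<bullet> y \<le> c} \<in> sets P"
  by (intro closed_sets_P closed_halfspace_le)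

lemma bdd_below_halfspace_measures: "bdd_below (range (\<lambda>u. measure P {y. u \<bullet> y \<le> u \<bullet> x}))"
  by (rule bdd_belowI[of _ 0]) auto

lemma HD_le_halfspace: "HD x P \<le> measure P {y. u \<bullet> y \<le> u \<bullet> x}"
  unfolding HD_def by (rule cINF_lower[OF bdd_below_halfspace_measures]) simp

lemma HD_ge_iff: "d \<le> HD x P \<longleftrightarrow> (\<forall>u. d \<le> measure P {y. u \<bullet> y \<le> u \<bullet> x})"
  unfolding HD_def by (subst le_cINF_iff[OF _ bdd_below_halfspace_measures]) auto

lemma HD_less_iff: "HD x P < d \<longleftrightarrow> (\<exists>u. measure P {y. u \<bullet> y \<le> u \<bullet> x} < d)"
  unfolding HD_def by (subst cINF_less_iff[OF _ bdd_below_halfspace_measures]) auto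

lemma HD_nonneg: "0 \<le> HD x P"
  by (simp add: HD_ge_iff)

lemma HD_le_1: "HD x P \<le> 1"
  using HD_le_halfspace[of x 0] prob_space by simp

lemma HD_le_maxdepth: "HD x P \<le> maxdepth P"
  unfolding maxdepth_def by (rule cSUP_upper) (auto intro!: bdd_aboveI[of _ 1] simp: HD_le_1)

lemma HD_convex_combination:
  assumes "0 \<le> t" "t \<le> 1"
  shows "min (HD x P) (HD y P) \<le> HD ((1 - t) *\<^sub>R x + t *\<^sub>R y) P"
  unfolding HD_ge_iff
proof
  fix u
  let ?z = "(1 - t) *\<^sub>R x + t *\<^sub>R y"
  have "min (u \<bullet> x) (u \<bullet> y) = (1 - t) * min (u \<bullet> x) (u \<bullet> y) + t * min (u \<bullet> x) (u \<bullet> y)"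
    by (simp add: algebra_simps)
  also have "\<dots> \<le> (1 - t) * (u \<bullet> x) + t * (u \<bullet> y)"
    using assms by (intro add_mono mult_left_mono) auto
  finally have "u \<bullet> x \<le> u \<bullet> ?z \<or> u \<bullet> y \<le> u \<bullet> ?z"
    by (auto simp: inner_add_right)
  then have "measure P {v. u \<bullet> v \<le> u \<bullet> x} \<le> measure P {v. u \<bullet> v \<le> u \<bullet> ?z}
      \<or> measure P {v. u \<bullet> v \<le> u \<bullet> y} \<le> measure P {v. u \<bullet> v \<le> u \<bullet> ?z}"
    by (auto intro!: finite_measure_mono)
  then show "min (HD x P) (HD y P) \<le> measure P {v. u \<bullet> v \<le> u \<bullet> ?z}"
    using HD_le_halfspace[of x u] HD_le_halfspace[of y u] by linarith
qed

lemma convex_central_region: "convex (central_region P d)"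
  unfolding convex_alt central_region_def
proof (clarsimp)
  fix x y and t :: real
  assume "d \<le> HD x P" "d \<le> HD y P" "0 \<le> t" "t \<le> 1"
  then show "d \<le> HD ((1 - t) *\<^sub>R x + t *\<^sub>R y) P"
    using HD_convex_combination[of t x y] by linarith
qed


lemma borel_measurable_P: "f \<in> borel_measurable borel \<Longrightarrow> f \<in> borel_measurable P"
  by (simp add: measurable_cong_sets[OF sets_P refl])

lemma measure_sublevel_eq_cdf:
  fixes f :: "real^'n \<Rightarrow> real"
  assumes "f \<in> borel_measurable borel"
  shows "measure P {y. f y \<le> c} = cdf (distr P borel f) c"
proof -
  have "cdf (distr P borel f) c = measure P (f -` {..c} \<inter> space P)"
    unfolding cdf_def using assms by (intro measure_distr borel_measurable_P) auto
  then show ?thesis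
    by (simp add: vimage_def)
qed

lemma halfspace_measure_right_continuous: "continuous (at_right c) (\<lambda>c. measure P {y. u \<bullet> y \<le> c})"
proof -
  interpret D: real_distribution "distr P borel (\<lambda>y. u \<bullet> y)"
    by (intro real_distribution_distr borel_measurable_P borel_measurable_continuous_onI continuous_intros)
  show ?thesis
    using D.cdf_is_right_cont by (simp add: measure_sublevel_eq_cdf)
qed

lemma tendsto_measure_norm_ge: "((\<lambda>r. measure P {y. r \<le> norm y}) \<longlongrightarrow> 0) at_top"
proof -
  interpret D: real_distribution "distr P borel norm"
    by (intro real_distribution_distr borel_measurable_P borel_measurable_continuous_onI continuous_intros)
  have "measure P {y. r \<le> norm y} \<le> measure P (space P - {y. norm y \<le> r - 1})" for r
    by (intro finite_measure_mono sets.compl_sets closed_sets_P closed_Collect_le continuous_intros) auto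
  also have "\<dots> r = 1 - cdf (distr P borel norm) (r - 1)" for r
    by (subst prob_compl) (auto simp: measure_sublevel_eq_cdf[OF borel_measurable_norm]
        intro!: closed_sets_P closed_Collect_le continuous_intros)
  finally have le: "measure P {y. r \<le> norm y} \<le> 1 - cdf (distr P borel norm) (r - 1)" for r .
  have "filterlim (\<lambda>r::real. - 1 + r) at_top at_top"
    by (rule filterlim_tendsto_add_at_top[OF tendsto_const filterlim_ident])
  from filterlim_compose[OF D.cdf_lim_at_top_prob this]
  have "((\<lambda>r. cdf (distr P borel norm) (r - 1)) \<longlongrightarrow> 1) at_top"
    by simp
  from tendsto_diff[OF tendsto_const[of "1::real"] this]
  have lim: "((\<lambda>r. 1 - cdf (distr P borel norm) (r - 1)) \<longlongrightarrow> 0) at_top"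
    by simp
  show ?thesis
    by (rule tendsto_sandwich[OF _ _ tendsto_const lim]) (simp_all add: le)
qed

lemma open_HD_less: "open {x. HD x P < d}"
proof (subst open_subopen, intro ballI)
  fix x assume "x \<in> {x. HD x P < d}"
  then obtain u where "measure P {y. u \<bullet> y \<le> u \<bullet> x} < d"
    by (auto simp: HD_less_iff)
  then have "\<forall>\<^sub>F c in at_right (u \<bullet> x). measure P {y. u \<bullet> y \<le> c} < d"
    using halfspace_measure_right_continuous unfolding continuous_within by (auto dest: order_tendstoD)
  then obtain b where "u \<bullet> x < b" and b: "\<And>c. u \<bullet> x < c \<Longrightarrow> c < b \<Longrightarrow> measure P {y. u \<bullet> y \<le> c} < d"
    unfolding eventually_at_right_field by auto
  define e where "e = (b - u \<bullet> x) / 2"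
  have "e > 0" "u \<bullet> x + e < b"
    using \<open>u \<bullet> x < b\<close> by (simp_all add: e_def field_simps)
  then have e: "e > 0" "measure P {y. u \<bullet> y \<le> u \<bullet> x + e} < d"
    using b by auto
  have "HD z P < d" if "u \<bullet> z < u \<bullet> x + e" for z
  proof -
    have "measure P {y. u \<bullet> y \<le> u \<bullet> z} \<le> measure P {y. u \<bullet> y \<le> u \<bullet> x + e}"
      using that by (intro finite_measure_mono) auto
    then show ?thesis
      using HD_le_halfspace[of z u] e(2) by linarith
  qed
  then show "\<exists>T. open T \<and> x \<in> T \<and> T \<subseteq> {x. HD x P < d}"
    using e(1) by (intro exI[of _ "{z. u \<bullet> z < u \<bullet> x + e}"]) (auto intro: open_halfspace_lt)
qed

lemma closed_central_region: "closed (central_region P d)"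
proof -
  have "central_region P d = - {x. HD x P < d}"
    by (auto simp: central_region_def)
  then show ?thesis
    using open_HD_less by (simp add: closed_def)
qed

lemma HD_le_measure_norm_ge: "HD x P \<le> measure P {y. norm x \<le> norm y}"
proof -
  have "{y. - x \<bullet> y \<le> - x \<bullet> x} \<subseteq> {y. norm x \<le> norm y}"
  proof (cases "x = 0")
    case False
    have "norm x * norm x \<le> norm x * norm y" if "x \<bullet> x \<le> x \<bullet> y" for y
      using that norm_cauchy_schwarz[of x y] by (simp add: dot_square_norm power2_eq_square)
    with False show ?thesis
      by auto
  qed simp
  then have "measure P {y. - x \<bullet> y \<le> - x \<bullet> x} \<le> measure P {y. norm x \<le> norm y}"
    by (intro finite_measure_mono closed_sets_P closed_Collect_le continuous_intros)
  then show ?thesis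
    using HD_le_halfspace[of x "- x"] by linarith
qed

lemma compact_central_region:
  assumes "d > 0"
  shows "compact (central_region P d)"
proof -
  obtain R where R: "\<And>r. r \<ge> R \<Longrightarrow> measure P {y. r \<le> norm y} < d"
    using order_tendstoD(2)[OF tendsto_measure_norm_ge assms] by (auto simp: eventually_at_top_linorder)
  have "central_region P d \<subseteq> cball 0 R"
  proof
    fix x assume "x \<in> central_region P d"
    then have "\<not> R \<le> norm x"
      using HD_le_measure_norm_ge[of x] R[of "norm x"] by (auto simp: central_region_def)
    then show "x \<in> cball 0 R"
      by simp
  qed
  then show ?thesis
    using closed_central_region bounded_subset[OF bounded_cball] compact_eq_bounded_closed by blast
qed

lemma tendsto_SUP_HD_norm_ge: "((\<lambda>r. SUP x\<in>{x. r \<le> norm x}. HD x P) \<longlongrightarrow> 0) at_top"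
proof (rule tendsto_sandwich[OF _ _ tendsto_const tendsto_measure_norm_ge])
  have bdd: "bdd_above ((\<lambda>x. HD x P) ` A)" for A
    by (rule bdd_aboveI[of _ 1]) (auto simp: HD_le_1)
  show "\<forall>\<^sub>F r in at_top. 0 \<le> (SUP x\<in>{x. r \<le> norm x}. HD x P)"
  proof (intro always_eventually allI)
    fix r :: real
    obtain x :: "real^'n" where "r \<le> norm x"
      using norm_ge_nonempty[of r] by blast
    then show "0 \<le> (SUP x\<in>{x. r \<le> norm x}. HD x P)"
      using HD_nonneg[of x] by (intro cSUP_upper2[OF bdd]) auto
  qed
  show "\<forall>\<^sub>F r in at_top. (SUP x\<in>{x. r \<le> norm x}. HD x P) \<le> measure P {y. r \<le> norm y}"
  proof (intro always_eventually allI cSUP_least[OF norm_ge_nonempty])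
    fix r :: real and x :: "real^'n"
    assume "x \<in> {x. r \<le> norm x}"
    then have "measure P {y. norm x \<le> norm y} \<le> measure P {y. r \<le> norm y}"
      by (intro finite_measure_mono closed_sets_P closed_Collect_le continuous_intros) auto
    then show "HD x P \<le> measure P {y. r \<le> norm y}"
      using HD_le_measure_norm_ge[of x] by linarith
  qed
qed

lemma HD_affine:
  fixes A :: "real^'n^'n" and b :: "real^'n"
  assumes "invertible A"
  shows "HD (A *v x + b) (distr P borel (\<lambda>y. A *v y + b)) = HD x P"
proof -
  let ?f = "\<lambda>y. A *v y + b"
  obtain A' where A': "A' ** A = mat 1"
    using assms unfolding invertible_def by blast
  have "?f \<in> borel_measurable P"
    by (intro borel_measurable_P borel_measurable_continuous_onI continuous_intros linear_continuous_on
        linear_conv_bounded_linear[THEN iffD1] matrix_vector_mul_linear)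
  then have halfspace: "measure (distr P borel ?f) {y. u \<bullet> y \<le> u \<bullet> ?f x}
      = measure P {y. (u v* A) \<bullet> y \<le> (u v* A) \<bullet> x}" for u
    by (simp add: measure_distr vimage_def dot_lmul_matrix inner_add_right)
  have "v = (v v* A') v* A" for v :: "real^'n"
    by (simp add: vector_matrix_mul_assoc A')
  then have surj: "range (\<lambda>u. u v* A) = UNIV"
    by (blast intro: range_eqI)
  have "range (\<lambda>u. measure P {y. (u v* A) \<bullet> y \<le> (u v* A) \<bullet> x})
      = (\<lambda>v. measure P {y. v \<bullet> y \<le> v \<bullet> x}) ` range (\<lambda>u. u v* A)"
    by (simp add: image_image)
  then show ?thesis
    unfolding HD_def halfspace surj by simp
qed

lemma central_region_affine:
  fixes A :: "real^'n^'n" and b :: "real^'n"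
  assumes "invertible A"
  shows "central_region (distr P borel (\<lambda>y. A *v y + b)) d = (\<lambda>y. A *v y + b) ` central_region P d"
proof -
  obtain A' where A': "A ** A' = mat 1"
    using assms unfolding invertible_def by blast
  have inverse: "A *v (A' *v (z - b)) + b = z" for z
    by (simp add: matrix_vector_mul_assoc A')
  have "z \<in> (\<lambda>y. A *v y + b) ` {y. d \<le> HD y P}" if "d \<le> HD z (distr P borel (\<lambda>y. A *v y + b))" for z
    using that HD_affine[OF assms, where x="A' *v (z - b)" and b=b] inverse[of z]
    by (intro image_eqI[of z _ "A' *v (z - b)"]) auto
  then show ?thesis
    unfolding central_region_def using HD_affine[OF assms] by auto
qed

lemma HD_ge_iff_unit:
  "d \<le> HD x P \<longleftrightarrow> d \<le> 1 \<and> (\<forall>u. norm u = 1 \<longrightarrow> d \<le> measure P {y. u \<bullet> y \<le> u \<bullet> x})"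
proof (intro iffI conjI allI impI)
  assume d: "d \<le> 1 \<and> (\<forall>u. norm u = 1 \<longrightarrow> d \<le> measure P {y. u \<bullet> y \<le> u \<bullet> x})"
  show "d \<le> HD x P"
    unfolding HD_ge_iff
  proof
    fix u :: "real^'n"
    show "d \<le> measure P {y. u \<bullet> y \<le> u \<bullet> x}"
    proof (cases "u = 0")
      case False
      then have eq: "{y. u \<bullet> y \<le> u \<bullet> x} = {y. (u /\<^sub>R norm u) \<bullet> y \<le> (u /\<^sub>R norm u) \<bullet> x}"
        by (auto simp: divide_le_cancel)
      have "norm (u /\<^sub>R norm u) = 1"
        using False by simp
      then have "d \<le> measure P {y. (u /\<^sub>R norm u) \<bullet> y \<le> (u /\<^sub>R norm u) \<bullet> x}"
        using d by blast
      then show ?thesis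
        unfolding eq .
    qed (use d prob_space in simp)
  qed
qed (use HD_le_1 HD_le_halfspace order_trans in blast)+

lemma tendsto_halfspace_measure:
  assumes null: "\<And>a. {y. u \<bullet> y = a} \<in> null_sets P"
    and v: "v \<longlonglongrightarrow> u" and z: "z \<longlonglongrightarrow> x"
  shows "(\<lambda>k. measure P {y. v k \<bullet> y \<le> v k \<bullet> z k}) \<longlonglongrightarrow> measure P {y. u \<bullet> y \<le> u \<bullet> x}"
proof -
  let ?A = "\<lambda>k. {y. v k \<bullet> y \<le> v k \<bullet> z k}"
  let ?B = "{y. u \<bullet> y \<le> u \<bullet> x}"
  have "(\<lambda>k. integral\<^sup>L P (indicator (?A k) :: _ \<Rightarrow> real)) \<longlonglongrightarrow> integral\<^sup>L P (indicator ?B)"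
  proof (rule integral_dominated_convergence[where w="\<lambda>_. 1"])
    have "AE y in P. y \<notin> {y. u \<bullet> y = u \<bullet> x}"
      by (rule AE_not_in[OF null])
    then show "AE y in P. (\<lambda>k. indicator (?A k) y :: real) \<longlonglongrightarrow> indicator ?B y"
    proof (rule eventually_mono)
      fix y assume "y \<notin> {y. u \<bullet> y = u \<bullet> x}"
      have lim: "(\<lambda>k. v k \<bullet> y - v k \<bullet> z k) \<longlonglongrightarrow> u \<bullet> y - u \<bullet> x"
        by (intro tendsto_intros v z)
      \<comment> \<open>off the hyperplane, the sign of \<open>v k \<bullet> y - v k \<bullet> z k\<close> is eventually that of its limit\<close>
      from \<open>y \<notin> _\<close> consider (neg) "u \<bullet> y - u \<bullet> x < 0" | (pos) "u \<bullet> y - u \<bullet> x > 0"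
        by fastforce
      then have "eventually (\<lambda>k. (indicator (?A k) y :: real) = indicator ?B y) sequentially"
      proof cases
        case neg
        from order_tendstoD(2)[OF lim neg] show ?thesis
          by eventually_elim (use neg in \<open>auto split: split_indicator\<close>)
      next
        case pos
        from order_tendstoD(1)[OF lim pos] show ?thesis
          by eventually_elim (use pos in \<open>auto split: split_indicator\<close>)
      qed
      then show "(\<lambda>k. indicator (?A k) y :: real) \<longlonglongrightarrow> indicator ?B y"
        by (rule tendsto_eventually)
    qed
  qed (auto split: split_indicator intro: borel_measurable_indicator)
  then show ?thesis
    by simp
qed

lemma continuous_on_halfspace_measure:
  assumes null: "\<And>u a. u \<noteq> 0 \<Longrightarrow> {y. u \<bullet> y = a} \<in> null_sets P"
  shows "continuous_on (sphere 0 1 \<times> UNIV) (\<lambda>(u, x). measure P {y. u \<bullet> y \<le> u \<bullet> x})"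
proof (rule continuous_on_sequentiallyI)
  fix w :: "nat \<Rightarrow> (real^'n) \<times> (real^'n)" and a
  assume "a \<in> sphere 0 1 \<times> UNIV" "w \<longlonglongrightarrow> a"
  moreover obtain u x where a: "a = (u, x)"
    by (cases a)
  ultimately have "u \<noteq> 0" "(\<lambda>k. fst (w k)) \<longlonglongrightarrow> u" "(\<lambda>k. snd (w k)) \<longlonglongrightarrow> x"
    using tendsto_fst[of w a] tendsto_snd[of w a] by auto
  from tendsto_halfspace_measure[OF null[OF this(1)] this(2,3)]
  show "(\<lambda>k. case w k of (u, x) \<Rightarrow> measure P {y. u \<bullet> y \<le> u \<bullet> x})
      \<longlonglongrightarrow> (case a of (u, x) \<Rightarrow> measure P {y. u \<bullet> y \<le> u \<bullet> x})"
    by (simp add: a case_prod_beta)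
qed

lemma continuous_on_HD:
  assumes null: "\<And>u a. u \<noteq> 0 \<Longrightarrow> {y. u \<bullet> y = a} \<in> null_sets P"
  shows "continuous_on UNIV (\<lambda>x. HD x P)"
  unfolding continuous_on_iff
proof (intro ballI allI impI)
  fix x0 :: "real^'n" and e :: real
  assume "e > 0"
  let ?g = "\<lambda>(u, x). measure P {y. u \<bullet> y \<le> u \<bullet> x}"
  let ?C = "sphere (0::real^'n) 1 \<times> cball x0 1"
  \<comment> \<open>uniform continuity on a compact set: the halfspace measures are equicontinuous in \<open>x\<close>\<close>
  have "uniformly_continuous_on ?C ?g"
    using continuous_on_halfspace_measure[OF null]
    by (intro compact_uniformly_continuous) (auto simp: compact_Times elim: continuous_on_subset)
  moreover have "e / 2 > 0"
    using \<open>e > 0\<close> by simp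
  ultimately obtain d where "d > 0"
    and d: "\<forall>w\<in>?C. \<forall>w'\<in>?C. dist w' w < d \<longrightarrow> dist (?g w') (?g w) < e / 2"
    unfolding uniformly_continuous_on_def by blast
  show "\<exists>d>0. \<forall>x\<in>UNIV. dist x x0 < d \<longrightarrow> dist (HD x P) (HD x0 P) < e"
  proof (intro exI[of _ "min d 1"] conjI ballI impI)
    fix x :: "real^'n"
    assume x: "dist x x0 < min d 1"
    have close: "\<bar>measure P {y. u \<bullet> y \<le> u \<bullet> x} - measure P {y. u \<bullet> y \<le> u \<bullet> x0}\<bar> < e / 2"
      if "norm u = 1" for u
      using d[rule_format, of "(u, x0)" "(u, x)"] that x
      by (simp add: dist_Pair_Pair dist_commute dist_real_def abs_minus_commute)
    have "HD x0 P - e / 2 \<le> measure P {y. u \<bullet> y \<le> u \<bullet> x}"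
      and "HD x P - e / 2 \<le> measure P {y. u \<bullet> y \<le> u \<bullet> x0}" if "norm u = 1" for u
      using HD_le_halfspace[of x0 u] HD_le_halfspace[of x u] close[OF that, unfolded abs_less_iff]
      by linarith+
    then have "HD x0 P - e / 2 \<le> HD x P" "HD x P - e / 2 \<le> HD x0 P"
      unfolding HD_ge_iff_unit using HD_le_1[of x] HD_le_1[of x0] \<open>e > 0\<close> by auto
    then show "dist (HD x P) (HD x0 P) < e"
      using \<open>e > 0\<close> by (simp add: dist_real_def abs_le_iff)
  qed (use \<open>d > 0\<close> in simp)
qed

end

section \<open>Illumination depth\<close>

lemma hyperplane_null_sets_density:
  fixes f :: "real^'n \<Rightarrow> ennreal"
  assumes "f \<in> borel_measurable lborel" "u \<noteq> 0"
  shows "{y. u \<bullet> y = a} \<in> null_sets (density lborel f)"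
proof -
  have "{y. u \<bullet> y = a} \<in> sets borel"
    by (intro borel_closed closed_hyperplane)
  moreover have "negligible {y. u \<bullet> y = a}"
    using assms(2) by (intro negligible_hyperplane) simp
  ultimately have "{y. u \<bullet> y = a} \<in> null_sets lborel"
    by (simp add: negligible_iff_null_sets null_sets_completion_iff)
  with assms(1) show ?thesis
    by (auto simp: null_sets_density_iff dest: AE_not_in)
qed

locale illumination_depth = euclidean_distribution P for P :: "(real^'n) measure" +
  fixes \<alpha> :: real
  assumes alpha_pos: "0 < \<alpha>" and alpha_lt_maxdepth: "\<alpha> < maxdepth P"
    and volume_pos: "measure lborel (central_region P \<alpha>) > 0"
begin

abbreviation K :: "(real^'n) set" where "K \<equiv> central_region P \<alpha>"

lemma compact_K: "compact K"
  using compact_central_region alpha_pos by blast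

lemma fst_ID [simp]: "fst (ID \<alpha> x P) = HD x P"
  by (simp add: ID_def)

lemma snd_ID [simp]: "snd (ID \<alpha> x P) = Ill x K / measure lborel K"
  by (simp add: ID_def)

lemma ball_in_K: obtains c r where "r > 0" "cball c r \<subseteq> K"
proof -
  have "interior K \<noteq> {}"
  proof
    assume "interior K = {}"
    then have "K \<in> null_sets lebesgue"
      using negligible_convex_interior[OF convex_central_region] by (simp add: negligible_iff_null_sets)
    then have "K \<in> null_sets lborel"
      using compact_K by (simp add: null_sets_completion_iff borel_compact)
    then show False
      using volume_pos by (simp add: measure_eq_0_null_sets)
  qed
  then obtain c e where "e > 0" "ball c e \<subseteq> K"
    by (metis ex_in_conv mem_interior)
  moreover have "cball c (e / 2) \<subseteq> ball c e"
    using \<open>e > 0\<close> by (simp add: cball_subset_ball_iff)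
  ultimately show ?thesis
    using that[of "e / 2" c] by simp
qed

lemma alpha_le_half: "\<alpha> \<le> 1 / 2"
proof -
  obtain c r where cr: "r > 0" "cball c r \<subseteq> K"
    using ball_in_K by blast
  obtain b :: "real^'n" where b: "b \<in> Basis"
    using nonempty_Basis by blast
  let ?c' = "c + r *\<^sub>R b"
  let ?A = "{y. b \<bullet> y \<le> b \<bullet> c}" and ?B = "{y. - b \<bullet> y \<le> - b \<bullet> ?c'}"
  have "c \<in> K" "?c' \<in> K"
    using cr b by (auto simp: dist_norm)
  then have "\<alpha> \<le> measure P ?A" "\<alpha> \<le> measure P ?B"
    using HD_le_halfspace[of c b] HD_le_halfspace[of ?c' "- b"] by (auto simp: central_region_def)
  moreover have "?A \<inter> ?B = {}"
    using cr(1) b by (auto simp: inner_add_right)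
  then have "measure P ?A + measure P ?B = measure P (?A \<union> ?B)"
    by (intro finite_measure_Union[symmetric] halfspace_sets_P)
  ultimately show ?thesis
    using prob_le_1[of "?A \<union> ?B"] by linarith
qed

lemma ID_affine:
  fixes A :: "real^'n^'n" and b :: "real^'n"
  assumes "invertible A"
  shows "ID \<alpha> (A *v x + b) (distr P borel (\<lambda>y. A *v y + b)) = ID \<alpha> x P"
proof -
  let ?f = "\<lambda>y. A *v y + b"
  obtain c where "c > 0" and c: "\<And>S. compact S \<Longrightarrow> measure lborel (?f ` S) = c * measure lborel S"
    using invertible_affine_image_measure[OF assms] by metis
  have "?f ` (convex hull (insert x K)) = (+) b ` (*v) A ` (convex hull (insert x K))"
    by (auto simp: image_image add.commute)
  also have "\<dots> = (+) b ` (convex hull ((*v) A ` insert x K))"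
    by (simp add: convex_hull_linear_image[OF matrix_vector_mul_linear])
  also have "\<dots> = convex hull ((+) b ` (*v) A ` insert x K)"
    by (rule convex_hull_translation[symmetric])
  also have "(+) b ` (*v) A ` insert x K = insert (?f x) (?f ` K)"
    by (auto simp: image_image add.commute)
  finally have "Ill (?f x) (?f ` K) = measure lborel (?f ` (convex hull (insert x K)))"
    by (simp add: Ill_eq_convex_hull_insert)
  also have "\<dots> = c * Ill x K"
    unfolding Ill_eq_convex_hull_insert using compact_K by (intro c compact_convex_hull compact_insert)
  moreover have "measure lborel (?f ` K) = c * measure lborel K"
    using compact_K by (rule c)
  ultimately show ?thesis
    using \<open>c > 0\<close> by (simp add: ID_def central_region_affine[OF assms] HD_affine[OF assms])
qed

lemma halfspace_symmetric_iff_ID: "halfspace_symmetric P x \<longleftrightarrow> (\<exists>c\<ge>1/2. ID \<alpha> x P = (c, 1))"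
proof
  assume symmetric: "halfspace_symmetric P x"
  have "1/2 \<le> measure P {y. u \<bullet> y \<le> u \<bullet> x}" if "norm u = 1" for u
  proof -
    from that have "u \<noteq> 0"
      by auto
    with symmetric show ?thesis
      unfolding halfspace_symmetric_def by blast
  qed
  then have "1/2 \<le> HD x P"
    unfolding HD_ge_iff_unit by simp
  then have "x \<in> K"
    using alpha_le_half by (simp add: central_region_def)
  then have "Ill x K / measure lborel K = 1"
    using volume_pos by (simp add: Ill_of_mem convex_central_region)
  with \<open>1/2 \<le> HD x P\<close> show "\<exists>c\<ge>1/2. ID \<alpha> x P = (c, 1)"
    by (simp add: ID_def)
next
  assume "\<exists>c\<ge>1/2. ID \<alpha> x P = (c, 1)"
  then have "1/2 \<le> HD x P"
    by (auto simp: ID_def)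
  show "halfspace_symmetric P x"
    unfolding halfspace_symmetric_def
  proof (intro allI impI)
    fix u :: "real^'n" and c
    assume "u \<bullet> x \<le> c"
    then have "measure P {y. u \<bullet> y \<le> u \<bullet> x} \<le> measure P {y. u \<bullet> y \<le> c}"
      by (intro finite_measure_mono) auto
    with \<open>1/2 \<le> HD x P\<close> show "1/2 \<le> measure P {y. u \<bullet> y \<le> c}"
      using HD_le_halfspace[of x u] by linarith
  qed
qed

lemma ID_monotone_along_ray:
  assumes deepest: "HD x P = maxdepth P" and st: "0 \<le> s" "s \<le> t"
  shows "fst (ID \<alpha> (x + t *\<^sub>R u) P) \<le> fst (ID \<alpha> (x + s *\<^sub>R u) P)"
    and "snd (ID \<alpha> (x + s *\<^sub>R u) P) \<le> snd (ID \<alpha> (x + t *\<^sub>R u) P)"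
proof -
  obtain w where w: "0 \<le> w" "w \<le> 1" and between: "x + s *\<^sub>R u = (1 - w) *\<^sub>R x + w *\<^sub>R (x + t *\<^sub>R u)"
  proof (cases "t = 0")
    case True
    with st show ?thesis
      by (intro that[of 0]) auto
  next
    case False
    with st show ?thesis
      by (intro that[of "s / t"]) (auto simp: algebra_simps)
  qed
  have "min (HD x P) (HD (x + t *\<^sub>R u) P) \<le> HD (x + s *\<^sub>R u) P"
    unfolding between by (rule HD_convex_combination[OF w])
  then show "fst (ID \<alpha> (x + t *\<^sub>R u) P) \<le> fst (ID \<alpha> (x + s *\<^sub>R u) P)"
    using deepest HD_le_maxdepth[of "x + t *\<^sub>R u"] by simp
  have "x \<in> K"
    using deepest alpha_lt_maxdepth by (simp add: central_region_def)
  then have "x + s *\<^sub>R u \<in> convex hull (insert (x + t *\<^sub>R u) K)"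
    unfolding between using w by (intro convexD_alt[OF convex_convex_hull]) (auto intro: hull_inc)
  then have "Ill (x + s *\<^sub>R u) K \<le> Ill (x + t *\<^sub>R u) K"
    by (rule Ill_mono[OF compact_K])
  then show "snd (ID \<alpha> (x + s *\<^sub>R u) P) \<le> snd (ID \<alpha> (x + t *\<^sub>R u) P)"
    using volume_pos by (simp add: divide_right_mono)
qed

lemma upper_semicont_fst_ID: "upper_semicont (\<lambda>x. fst (ID \<alpha> x P))"
  using open_HD_less by (simp add: upper_semicont_def)

lemma continuous_on_snd_ID: "continuous_on UNIV (\<lambda>x. snd (ID \<alpha> x P))"
  unfolding snd_ID using volume_pos
  by (intro continuous_on_divide continuous_on_const continuous_on_Ill compact_K convex_central_region) auto

lemma continuous_on_ID_density:
  assumes "f \<in> borel_measurable lborel" "P = density lborel f"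
  shows "continuous_on UNIV (\<lambda>x. ID \<alpha> x P)"
proof -
  have "continuous_on UNIV (\<lambda>x. HD x P)"
    using assms by (intro continuous_on_HD) (simp add: hyperplane_null_sets_density)
  then have "continuous_on UNIV (\<lambda>x. (fst (ID \<alpha> x P), snd (ID \<alpha> x P)))"
    by (intro continuous_on_Pair continuous_on_snd_ID) simp
  then show ?thesis
    by (simp only: prod.collapse)
qed

lemma convex_compact_ID_level_set:
  shows "convex {x. fst (ID \<alpha> x P) \<ge> c1 \<and> snd (ID \<alpha> x P) \<le> c2}"
    and "c1 > 0 \<Longrightarrow> compact {x. fst (ID \<alpha> x P) \<ge> c1 \<and> snd (ID \<alpha> x P) \<le> c2}"
proof -
  have eq: "{x. fst (ID \<alpha> x P) \<ge> c1 \<and> snd (ID \<alpha> x P) \<le> c2}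
      = central_region P c1 \<inter> {x. Ill x K \<le> c2 * measure lborel K}"
    using volume_pos by (auto simp: central_region_def pos_divide_le_eq)
  have "convex {x. Ill x K \<le> c2 * measure lborel K}"
    by (rule convex_on_sublevel_set[OF convex_on_Ill[OF compact_K convex_central_region]])
  then show "convex {x. fst (ID \<alpha> x P) \<ge> c1 \<and> snd (ID \<alpha> x P) \<le> c2}"
    unfolding eq by (intro convex_Int convex_central_region)
  have "closed {x. Ill x K \<le> c2 * measure lborel K}"
    using continuous_on_Ill[OF compact_K convex_central_region] by (intro closed_Collect_le) auto
  then show "compact {x. fst (ID \<alpha> x P) \<ge> c1 \<and> snd (ID \<alpha> x P) \<le> c2}" if "c1 > 0"
    unfolding eq using compact_central_region[OF that] by (rule compact_Int_closed[rotated])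
qed

lemma filterlim_INF_snd_ID: "filterlim (\<lambda>r. INF x\<in>{x. r \<le> norm x}. snd (ID \<alpha> x P)) at_top at_top"
proof -
  let ?V = "measure lborel K"
  obtain c \<rho> where \<rho>: "\<rho> > 0" "cball c \<rho> \<subseteq> K"
    using ball_in_K by blast
  obtain R where "R > 0" "K \<subseteq> ball c R"
    using bounded_subset_ballD[OF compact_imp_bounded[OF compact_K]] by blast
  then have R: "R > 0" "K \<subseteq> cball c R"
    by auto
  define m where "m = measure lborel (cball c (\<rho> / 2))"
  have "m > 0"
    unfolding m_def using \<rho>(1) by (intro content_cball_pos) simp
  have "Ill c K = ?V"
    using \<rho> by (intro Ill_of_mem convex_central_region) auto
  moreover have "Ill c K + m \<le> Ill y K" if "dist c y = 4 * R" for y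
    using Ill_ge_measure_add_ball[OF compact_K \<rho>(2,1) R(2) that] \<open>Ill c K = ?V\<close>
    by (simp add: m_def)
  ultimately have "?V + m * dist c x / (4 * R) \<le> Ill x K" if "4 * R \<le> dist c x" for x
    using convex_on_ge_linear_growth[OF convex_on_Ill[OF compact_K convex_central_region], of "4 * R" c x m]
      R(1) that by auto
  then have "1 + (m / (4 * R * ?V)) * dist c x \<le> snd (ID \<alpha> x P)" if "4 * R \<le> dist c x" for x
    using that volume_pos by (simp add: field_simps)
  then show ?thesis
    using \<open>m > 0\<close> R(1) volume_pos
    by (intro filterlim_INF_norm_ge_at_top[where b="m / (4 * R * ?V)" and R="4 * R" and c=c and a=1]) auto
qed

end

theorem theorem1:
  fixes P :: "(real^'n) measure" and \<alpha> :: real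
  assumes prob: "prob_space P"
    and borelP: "sets P = sets borel"
    and alpha_pos: "0 < \<alpha>" and alpha_lt: "\<alpha> < maxdepth P"
    and vol_pos: "measure lborel (central_region P \<alpha>) > 0"
  shows
    "(\<forall>(A::real^'n^'n) b x. invertible A \<longrightarrow>
        ID \<alpha> (A *v x + b) (distr P borel (\<lambda>y. A *v y + b)) = ID \<alpha> x P)
   \<and> (\<forall>x. halfspace_symmetric P x \<longleftrightarrow> (\<exists>c\<ge>1/2. ID \<alpha> x P = (c, 1)))
   \<and> (\<forall>x. HD x P = maxdepth P \<longrightarrow>
        (\<forall>u s t. 0 \<le> s \<longrightarrow> s \<le> t \<longrightarrow>
           fst (ID \<alpha> (x + t *\<^sub>R u) P) \<le> fst (ID \<alpha> (x + s *\<^sub>R u) P) \<and>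
           snd (ID \<alpha> (x + s *\<^sub>R u) P) \<le> snd (ID \<alpha> (x + t *\<^sub>R u) P)))
   \<and> (\<forall>c1 c2. convex {x. fst (ID \<alpha> x P) \<ge> c1 \<and> snd (ID \<alpha> x P) \<le> c2} \<and>
        (c1 > 0 \<longrightarrow> compact {x. fst (ID \<alpha> x P) \<ge> c1 \<and> snd (ID \<alpha> x P) \<le> c2}))
   \<and> upper_semicont (\<lambda>x. fst (ID \<alpha> x P))
   \<and> continuous_on UNIV (\<lambda>x. snd (ID \<alpha> x P))
   \<and> ((\<exists>f. f \<in> borel_measurable lborel \<and> (\<forall>y. f y \<ge> 0) \<and> P = density lborel f) \<longrightarrow>
        continuous_on UNIV (\<lambda>x. ID \<alpha> x P))
   \<and> ((\<lambda>r. SUP x\<in>{x. norm x \<ge> r}. fst (ID \<alpha> x P)) \<longlongrightarrow> 0) at_top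
   \<and> filterlim (\<lambda>r. INF x\<in>{x. norm x \<ge> r}. snd (ID \<alpha> x P)) at_top at_top"
proof -
  interpret illumination_depth P \<alpha>
    using prob borelP alpha_pos alpha_lt vol_pos
    by (simp add: illumination_depth_def euclidean_distribution_def illumination_depth_axioms_def
        euclidean_distribution_axioms_def)
  show ?thesis
    using ID_affine halfspace_symmetric_iff_ID ID_monotone_along_ray convex_compact_ID_level_set
      upper_semicont_fst_ID continuous_on_snd_ID continuous_on_ID_density
      tendsto_SUP_HD_norm_ge filterlim_INF_snd_ID
    by auto
qed

end
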